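(* Let $p: E \to B$ be a weak homology fibration of simplicial sets and let $f: B' \to B$ be a fibration. Then the pull-back $p': E' = B' \times_B E \to B'$ of $p$ along $f$ is again a weak homology fibration.
   Context: Spaces are simplicial sets. For a map $p: E \to B$ and an $n$-simplex $\sigma: \Delta[n] \to B$, $dp(\sigma)$ denotes the pull-back of $\Delta[n] \xrightarrow{\sigma} B \xleftarrow{p} E$ (the "preimage" of $\sigma$). A map $p: E \to B$ is a weak homology fibration if for every simplex $\sigma$ of $B$ and every simplicial operation $\theta$ (so that $\theta\sigma = \sigma\circ\theta$), the natural map between $dp(\theta\sigma)$ and $dp(\sigma)$ induces an isomorphism in integral homology. Homology means integral homology. *)

theory Defs
  imports Main
begin

definition mono_map :: "nat \<Rightarrow> nat \<Rightarrow> (nat \<Rightarrow> nat) \<Rightarrow> bool" where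
  "mono_map m n \<theta> \<longleftrightarrow> (\<forall>i\<le>m. \<theta> i \<le> n) \<and> (\<forall>i j. i \<le> j \<and> j \<le> m \<longrightarrow> \<theta> i \<le> \<theta> j)"

text \<open>cells X n = set of n-simplices; act X theta m n x = theta^* x for theta : [m] -> [n], x in X_n.\<close>
record 'a sset =
  cells :: "nat \<Rightarrow> 'a set"
  act :: "(nat \<Rightarrow> nat) \<Rightarrow> nat \<Rightarrow> nat \<Rightarrow> 'a \<Rightarrow> 'a"

definition is_sset :: "'a sset \<Rightarrow> bool" where
  "is_sset X \<longleftrightarrow>
     (\<forall>\<theta> m n x. mono_map m n \<theta> \<and> x \<in> cells X n \<longrightarrow> act X \<theta> m n x \<in> cells X m) \<and>
     (\<forall>\<theta> \<theta>' m n x. mono_map m n \<theta> \<and> (\<forall>i\<le>m. \<theta> i = \<theta>' i) \<and> x \<in> cells X n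
        \<longrightarrow> act X \<theta> m n x = act X \<theta>' m n x) \<and>
     (\<forall>n x. x \<in> cells X n \<longrightarrow> act X id n n x = x) \<and>
     (\<forall>\<theta> \<alpha> k m n x. mono_map m n \<theta> \<and> mono_map k m \<alpha> \<and> x \<in> cells X n
        \<longrightarrow> act X \<alpha> k m (act X \<theta> m n x) = act X (\<theta> \<circ> \<alpha>) k n x)"

definition is_smap :: "'a sset \<Rightarrow> 'b sset \<Rightarrow> (nat \<Rightarrow> 'a \<Rightarrow> 'b) \<Rightarrow> bool" where
  "is_smap X Y f \<longleftrightarrow>
     (\<forall>n x. x \<in> cells X n \<longrightarrow> f n x \<in> cells Y n) \<and>
     (\<forall>\<theta> m n x. mono_map m n \<theta> \<and> x \<in> cells X n
        \<longrightarrow> f m (act X \<theta> m n x) = act Y \<theta> m n (f n x))"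

definition coface :: "nat \<Rightarrow> nat \<Rightarrow> nat" where
  "coface i j = (if j < i then j else Suc j)"

definition face :: "'a sset \<Rightarrow> nat \<Rightarrow> nat \<Rightarrow> 'a \<Rightarrow> 'a" where
  "face X n i x = act X (coface i) (n - 1) n x"

text \<open>The standard simplex Delta[n]: k-simplices are monotone maps [k] -> [n] (normalised to 0 outside {0..k}).\<close>
definition std_simplex :: "nat \<Rightarrow> (nat \<Rightarrow> nat) sset" where
  "std_simplex n = \<lparr> cells = (\<lambda>k. {\<alpha>. mono_map k n \<alpha> \<and> (\<forall>i>k. \<alpha> i = 0)}),
                     act = (\<lambda>\<theta> m k \<alpha>. (\<lambda>i. if i \<le> m then \<alpha> (\<theta> i) else 0)) \<rparr>"

definition sset_pullback :: "'x sset \<Rightarrow> 'y sset \<Rightarrow> (nat \<Rightarrow> 'x \<Rightarrow> 'z) \<Rightarrow> (nat \<Rightarrow> 'y \<Rightarrow> 'z)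
    \<Rightarrow> ('x \<times> 'y) sset" where
  "sset_pullback X Y f g = \<lparr> cells = (\<lambda>k. {(x, y). x \<in> cells X k \<and> y \<in> cells Y k \<and> f k x = g k y}),
                            act = (\<lambda>\<theta> m n (x, y). (act X \<theta> m n x, act Y \<theta> m n y)) \<rparr>"

definition char_map :: "'b sset \<Rightarrow> nat \<Rightarrow> 'b \<Rightarrow> nat \<Rightarrow> (nat \<Rightarrow> nat) \<Rightarrow> 'b" where
  "char_map B n \<sigma> = (\<lambda>k \<alpha>. act B \<alpha> k n \<sigma>)"

definition dp :: "'b sset \<Rightarrow> 'e sset \<Rightarrow> (nat \<Rightarrow> 'e \<Rightarrow> 'b) \<Rightarrow> nat \<Rightarrow> 'b \<Rightarrow> ((nat \<Rightarrow> nat) \<times> 'e) sset" where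
  "dp B E p n \<sigma> = sset_pullback (std_simplex n) E (char_map B n \<sigma>) p"

definition kan_fibration :: "'y sset \<Rightarrow> 'x sset \<Rightarrow> (nat \<Rightarrow> 'y \<Rightarrow> 'x) \<Rightarrow> bool" where
  "kan_fibration Y X f \<longleftrightarrow>
     (\<forall>n k (y :: nat \<Rightarrow> 'y) x. 1 \<le> n \<and> k \<le> n \<and>
        (\<forall>i\<le>n. i \<noteq> k \<longrightarrow> y i \<in> cells Y (n - 1)) \<and>
        (\<forall>i j. i < j \<and> j \<le> n \<and> i \<noteq> k \<and> j \<noteq> k
             \<longrightarrow> face Y (n - 1) i (y j) = face Y (n - 1) (j - 1) (y i)) \<and>
        x \<in> cells X n \<and>
        (\<forall>i\<le>n. i \<noteq> k \<longrightarrow> face X n i x = f (n - 1) (y i))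
      \<longrightarrow> (\<exists>z \<in> cells Y n. f n z = x \<and> (\<forall>i\<le>n. i \<noteq> k \<longrightarrow> face Y n i z = y i)))"

definition chains :: "'a sset \<Rightarrow> nat \<Rightarrow> ('a \<Rightarrow> int) set" where
  "chains X n = {c. finite {x. c x \<noteq> 0} \<and> {x. c x \<noteq> 0} \<subseteq> cells X n}"

definition push :: "('a \<Rightarrow> 'b) \<Rightarrow> ('a \<Rightarrow> int) \<Rightarrow> ('b \<Rightarrow> int)" where
  "push g c = (\<lambda>y. \<Sum>x\<in>{x. c x \<noteq> 0 \<and> g x = y}. c x)"

text \<open>Boundary C_(n+1) -> C_n.\<close>
definition bdry :: "'a sset \<Rightarrow> nat \<Rightarrow> ('a \<Rightarrow> int) \<Rightarrow> ('a \<Rightarrow> int)" where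
  "bdry X n c = (\<lambda>y. \<Sum>i\<le>Suc n. (-1) ^ i * push (face X (Suc n) i) c y)"

definition cycles :: "'a sset \<Rightarrow> nat \<Rightarrow> ('a \<Rightarrow> int) set" where
  "cycles X n = {c \<in> chains X n. case n of 0 \<Rightarrow> True | Suc m \<Rightarrow> bdry X m c = (\<lambda>_. 0)}"

definition boundaries :: "'a sset \<Rightarrow> nat \<Rightarrow> ('a \<Rightarrow> int) set" where
  "boundaries X n = bdry X n ` chains X (Suc n)"

definition homologous :: "'a sset \<Rightarrow> nat \<Rightarrow> (('a \<Rightarrow> int) \<times> ('a \<Rightarrow> int)) set" where
  "homologous X n = {(c, c'). c \<in> cycles X n \<and> c' \<in> cycles X n \<and> (\<lambda>x. c x - c' x) \<in> boundaries X n}"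

definition homology :: "'a sset \<Rightarrow> nat \<Rightarrow> ('a \<Rightarrow> int) set set" where
  "homology X n = cycles X n // homologous X n"

definition induced_hom :: "'b sset \<Rightarrow> (nat \<Rightarrow> 'a \<Rightarrow> 'b) \<Rightarrow> nat \<Rightarrow> ('a \<Rightarrow> int) set \<Rightarrow> ('b \<Rightarrow> int) set" where
  "induced_hom Y f n C = homologous Y n `` (push (f n) ` C)"

definition homology_iso :: "'a sset \<Rightarrow> 'b sset \<Rightarrow> (nat \<Rightarrow> 'a \<Rightarrow> 'b) \<Rightarrow> bool" where
  "homology_iso X Y f \<longleftrightarrow> (\<forall>n. bij_betw (induced_hom Y f n) (homology X n) (homology Y n))"

text \<open>The natural map dp(theta sigma) -> dp(sigma), (alpha, e) |-> (theta o alpha, e).\<close>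
definition dp_map :: "(nat \<Rightarrow> nat) \<Rightarrow> nat \<Rightarrow> (nat \<Rightarrow> nat) \<times> 'e \<Rightarrow> (nat \<Rightarrow> nat) \<times> 'e" where
  "dp_map \<theta> k = (\<lambda>(\<alpha>, e). ((\<lambda>i. if i \<le> k then \<theta> (\<alpha> i) else 0), e))"

definition weak_homology_fibration :: "'e sset \<Rightarrow> 'b sset \<Rightarrow> (nat \<Rightarrow> 'e \<Rightarrow> 'b) \<Rightarrow> bool" where
  "weak_homology_fibration E B p \<longleftrightarrow>
     (\<forall>n \<sigma> m \<theta>. \<sigma> \<in> cells B n \<and> mono_map m n \<theta> \<longrightarrow>
        homology_iso (dp B E p m (act B \<theta> m n \<sigma>)) (dp B E p n \<sigma>) (dp_map \<theta>))"

end

theory Submission imports Defs begin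

text \<open>
  For a simplex \<open>\<tau>\<close> of \<open>B'\<close>, the fibre \<open>dp'(\<tau>)\<close> of \<open>p'\<close> is isomorphic to the fibre
  \<open>dp(f \<tau>)\<close> of \<open>p\<close> via \<open>(\<alpha>, e) \<mapsto> (\<alpha>, (\<alpha>\<^sup>* \<tau>, e))\<close>: the \<open>B'\<close>-component of a simplex
  \<open>(\<alpha>, (b, e))\<close> of \<open>dp'(\<tau>)\<close> is forced to be \<open>\<alpha>\<^sup>* \<tau>\<close>, and it lies over \<open>p e\<close> because \<open>f\<close> is
  simplicial. These isomorphisms commute with face maps and with the maps
  \<open>dp(\<theta>\<^sup>* \<tau>) \<rightarrow> dp(\<tau>)\<close>, so the homology isomorphisms for \<open>p\<close> transfer to \<open>p'\<close>.
\<close>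

lemma push_apply_inj: "inj h \<Longrightarrow> push h c (h x) = c x"
proof -
  assume "inj h"
  hence "{x'. c x' \<noteq> 0 \<and> h x' = h x} = (if c x \<noteq> 0 then {x} else {})"
    by (auto dest: injD)
  thus ?thesis unfolding push_def by auto
qed

lemma push_outside_range: "y \<notin> range h \<Longrightarrow> push h c y = 0"
proof -
  assume "y \<notin> range h"
  hence "{x. c x \<noteq> 0 \<and> h x = y} = {}" by auto
  thus ?thesis unfolding push_def by (simp only: sum.empty)
qed

lemma push_inj_eq: "inj h \<Longrightarrow> push h c = (\<lambda>y. if y \<in> range h then c (inv h y) else 0)"
  by (rule ext) (auto simp: push_apply_inj push_outside_range)

lemma inj_push: "inj h \<Longrightarrow> inj (push h)"
  by (rule injI, rule ext) (metis push_apply_inj)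

lemma push_zero: "push h (\<lambda>_. 0) = (\<lambda>_. 0)"
  unfolding push_def by simp

lemma push_cong: "(\<And>x. c x \<noteq> 0 \<Longrightarrow> a x = b x) \<Longrightarrow> push a c = push b c"
  unfolding push_def by (rule ext) (rule sum.cong, auto)

lemma push_support_inj:
  assumes "inj h" shows "{y. push h c y \<noteq> 0} = h ` {x. c x \<noteq> 0}"
proof (intro set_eqI iffI)
  fix y assume y: "y \<in> {y. push h c y \<noteq> 0}"
  hence "y \<in> range h" using push_outside_range[of y h c] by auto
  with y show "y \<in> h ` {x. c x \<noteq> 0}" using assms by (auto simp: push_apply_inj)
qed (use assms in \<open>auto simp: push_apply_inj\<close>)

lemma push_comp_inj_right:
  assumes "inj h" shows "push a (push h c) = push (a \<circ> h) c"
proof (rule ext)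
  fix z
  have supp: "{y. push h c y \<noteq> 0 \<and> a y = z} = h ` {x. c x \<noteq> 0 \<and> a (h x) = z}"
  proof (intro set_eqI iffI)
    fix y assume y: "y \<in> {y. push h c y \<noteq> 0 \<and> a y = z}"
    hence "y \<in> range h" using push_outside_range[of y h c] by auto
    with y show "y \<in> h ` {x. c x \<noteq> 0 \<and> a (h x) = z}" using assms by (auto simp: push_apply_inj)
  qed (use assms in \<open>auto simp: push_apply_inj\<close>)
  have "push a (push h c) z = (\<Sum>y\<in>h ` {x. c x \<noteq> 0 \<and> a (h x) = z}. push h c y)"
    unfolding push_def[of a] supp ..
  also have "\<dots> = (\<Sum>x\<in>{x. c x \<noteq> 0 \<and> a (h x) = z}. push h c (h x))"
    using assms by (subst sum.reindex) (auto intro: inj_on_subset)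
  also have "\<dots> = push (a \<circ> h) c z"
    unfolding push_def[of "a \<circ> h"] using assms by (intro sum.cong) (auto simp: push_apply_inj)
  finally show "push a (push h c) z = push (a \<circ> h) c z" .
qed

lemma push_comp_inj_left:
  assumes "inj h" shows "push h (push a c) = push (h \<circ> a) c"
proof (rule ext)
  fix y
  show "push h (push a c) y = push (h \<circ> a) c y"
  proof (cases "y \<in> range h")
    case True
    then obtain z where z: "y = h z" by auto
    have "{x. c x \<noteq> 0 \<and> (h \<circ> a) x = y} = {x. c x \<noteq> 0 \<and> a x = z}"
      using assms z by (auto dest: injD)
    then show ?thesis
      using z assms unfolding push_def[of "h \<circ> a"] by (simp add: push_apply_inj push_def[of a])
  next
    case False
    hence "y \<notin> range (h \<circ> a)" by auto
    thus ?thesis using False by (simp add: push_outside_range)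
  qed
qed

text \<open>Only cells and faces enter the chain complex, so this notion, which ignores degeneracies,
  suffices to identify homology.\<close>
definition face_iso :: "'a sset \<Rightarrow> 'b sset \<Rightarrow> (nat \<Rightarrow> 'a \<Rightarrow> 'b) \<Rightarrow> bool" where
  "face_iso X X' h \<longleftrightarrow> (\<forall>k. inj (h k)) \<and> (\<forall>k. h k ` cells X k = cells X' k) \<and>
    (\<forall>k i x. x \<in> cells X (Suc k) \<and> i \<le> Suc k \<longrightarrow>
       face X' (Suc k) i (h (Suc k) x) = h k (face X (Suc k) i x))"

lemma face_isoD:
  assumes "face_iso X X' h"
  shows face_iso_inj: "inj (h k)"
    and face_iso_cells: "h k ` cells X k = cells X' k"
    and face_iso_face: "x \<in> cells X (Suc k) \<Longrightarrow> i \<le> Suc k \<Longrightarrow>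
          face X' (Suc k) i (h (Suc k) x) = h k (face X (Suc k) i x)"
  using assms unfolding face_iso_def by auto

context
  fixes X :: "'a sset" and X' :: "'b sset" and h
  assumes iso: "face_iso X X' h"
begin

lemma face_iso_push_chains_iff: "push (h k) c \<in> chains X' k \<longleftrightarrow> c \<in> chains X k"
  unfolding chains_def face_iso_cells[OF iso, of k, symmetric]
  using face_iso_inj[OF iso, of k]
  by (simp add: push_support_inj finite_image_iff inj_on_subset inj_image_subset_iff)

lemma face_iso_chains: "chains X' k = push (h k) ` chains X k"
proof
  show "push (h k) ` chains X k \<subseteq> chains X' k" using face_iso_push_chains_iff by auto
next
  show "chains X' k \<subseteq> push (h k) ` chains X k"
  proof
    fix d assume d: "d \<in> chains X' k"
    have zero: "d y = 0" if "y \<notin> range (h k)" for y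
      using d that face_iso_cells[OF iso, of k] unfolding chains_def by blast
    have d_eq: "d = push (h k) (d \<circ> h k)"
    proof
      fix y show "d y = push (h k) (d \<circ> h k) y"
      proof (cases "y \<in> range (h k)")
        case True
        then show ?thesis using face_iso_inj[OF iso, of k] by (auto simp: push_apply_inj)
      next
        case False
        then show ?thesis by (simp add: zero push_outside_range)
      qed
    qed
    hence "d \<circ> h k \<in> chains X k" using d face_iso_push_chains_iff by metis
    with d_eq show "d \<in> push (h k) ` chains X k" by blast
  qed
qed

lemma face_iso_bdry:
  assumes c: "c \<in> chains X (Suc k)"
  shows "bdry X' k (push (h (Suc k)) c) = push (h k) (bdry X k c)"
proof -
  note inj = face_iso_inj[OF iso]
  have faces: "push (face X' (Suc k) i) (push (h (Suc k)) c) = push (h k) (push (face X (Suc k) i) c)"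
    if "i \<le> Suc k" for i
  proof -
    have "push (face X' (Suc k) i) (push (h (Suc k)) c) = push (face X' (Suc k) i \<circ> h (Suc k)) c"
      by (rule push_comp_inj_right[OF inj])
    also have "\<dots> = push (h k \<circ> face X (Suc k) i) c"
      by (rule push_cong) (use c that face_iso_face[OF iso] in \<open>auto simp: chains_def\<close>)
    also have "\<dots> = push (h k) (push (face X (Suc k) i) c)"
      by (rule push_comp_inj_left[OF inj, symmetric])
    finally show ?thesis .
  qed
  show ?thesis
  proof
    fix y
    have "bdry X' k (push (h (Suc k)) c) y
        = (\<Sum>i\<le>Suc k. (-1) ^ i * push (h k) (push (face X (Suc k) i) c) y)"
      unfolding bdry_def by (rule sum.cong) (simp_all add: faces)
    also have "\<dots> = push (h k) (bdry X k c) y"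
      using inj[of k] unfolding bdry_def by (simp add: push_inj_eq)
    finally show "bdry X' k (push (h (Suc k)) c) y = push (h k) (bdry X k c) y" .
  qed
qed

lemma face_iso_push_cycles_iff: "push (h k) c \<in> cycles X' k \<longleftrightarrow> c \<in> cycles X k"
proof (cases k)
  case 0 thus ?thesis using face_iso_push_chains_iff by (simp add: cycles_def)
next
  case (Suc m)
  have "push (h m) d = (\<lambda>_. 0) \<longleftrightarrow> d = (\<lambda>_. 0)" for d
    using inj_eq[OF inj_push[OF face_iso_inj[OF iso]], of m d "\<lambda>_. 0"] by (simp add: push_zero)
  thus ?thesis using face_iso_push_chains_iff face_iso_bdry Suc by (auto simp: cycles_def)
qed

lemma face_iso_cycles: "cycles X' k = push (h k) ` cycles X k"
proof
  show "push (h k) ` cycles X k \<subseteq> cycles X' k" using face_iso_push_cycles_iff by auto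
next
  show "cycles X' k \<subseteq> push (h k) ` cycles X k"
  proof
    fix d assume d: "d \<in> cycles X' k"
    hence "d \<in> chains X' k" by (auto simp: cycles_def)
    then obtain c where c: "d = push (h k) c" using face_iso_chains by auto
    hence "c \<in> cycles X k" using d face_iso_push_cycles_iff by simp
    thus "d \<in> push (h k) ` cycles X k" using c by auto
  qed
qed

lemma face_iso_boundaries: "boundaries X' k = push (h k) ` boundaries X k"
proof -
  have "boundaries X' k = bdry X' k ` push (h (Suc k)) ` chains X (Suc k)"
    unfolding boundaries_def face_iso_chains ..
  also have "\<dots> = push (h k) ` bdry X k ` chains X (Suc k)"
    unfolding image_image using face_iso_bdry by (intro image_cong) auto
  finally show ?thesis unfolding boundaries_def .
qed

lemma face_iso_push_homologous_iff:
  "(push (h k) c, push (h k) c') \<in> homologous X' k \<longleftrightarrow> (c, c') \<in> homologous X k"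
proof -
  have diff: "(\<lambda>x. push (h k) c x - push (h k) c' x) = push (h k) (\<lambda>x. c x - c' x)"
    using face_iso_inj[OF iso, of k] by (auto simp: push_inj_eq)
  have "push (h k) e \<in> boundaries X' k \<longleftrightarrow> e \<in> boundaries X k" for e
    unfolding face_iso_boundaries using inj_push[OF face_iso_inj[OF iso]]
    by (simp add: inj_image_mem_iff)
  thus ?thesis unfolding homologous_def using face_iso_push_cycles_iff diff by simp
qed

lemma face_iso_homologous_Image:
  "push (h k) ` (homologous X k `` S) = homologous X' k `` (push (h k) ` S)"
proof
  show "push (h k) ` (homologous X k `` S) \<subseteq> homologous X' k `` (push (h k) ` S)"
    using face_iso_push_homologous_iff by blast
next
  show "homologous X' k `` (push (h k) ` S) \<subseteq> push (h k) ` (homologous X k `` S)"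
  proof
    fix d assume "d \<in> homologous X' k `` (push (h k) ` S)"
    then obtain s where s: "s \<in> S" "(push (h k) s, d) \<in> homologous X' k" by auto
    hence "d \<in> cycles X' k" by (auto simp: homologous_def)
    then obtain e where "d = push (h k) e" using face_iso_cycles by auto
    thus "d \<in> push (h k) ` (homologous X k `` S)" using s face_iso_push_homologous_iff by blast
  qed
qed

lemma face_iso_homology: "bij_betw (\<lambda>C. push (h k) ` C) (homology X k) (homology X' k)"
proof -
  have "homology X' k = (\<Union>x\<in>cycles X k. {homologous X' k `` {push (h k) x}})"
    unfolding homology_def quotient_def face_iso_cycles by simp
  also have "\<dots> = (\<Union>x\<in>cycles X k. {push (h k) ` (homologous X k `` {x})})"
    using face_iso_homologous_Image[of k] by simp
  also have "\<dots> = (\<lambda>C. push (h k) ` C) ` homology X k"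
    unfolding homology_def quotient_def by auto
  finally have "homology X' k = (\<lambda>C. push (h k) ` C) ` homology X k" .
  moreover have "inj_on (\<lambda>C. push (h k) ` C) (homology X k)"
    using inj_push[OF face_iso_inj[OF iso]] by (auto simp: inj_on_def inj_image_eq_iff)
  ultimately show ?thesis by (simp add: bij_betw_def)
qed

end

lemma homology_class_subset_chains: "C \<in> homology X k \<Longrightarrow> C \<subseteq> chains X k"
  unfolding homology_def quotient_def homologous_def cycles_def by auto

lemma homology_iso_transfer:
  assumes isoX: "face_iso X X' hX" and isoY: "face_iso Y Y' hY"
    and comm: "\<And>k x. x \<in> cells X k \<Longrightarrow> g' k (hX k x) = hY k (g k x)"
    and hiso: "homology_iso X Y g"
  shows "homology_iso X' Y' g'"
  unfolding homology_iso_def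
proof
  fix k
  let ?QX = "\<lambda>C. push (hX k) ` C" and ?QY = "\<lambda>C. push (hY k) ` C"
  note injX = face_iso_inj[OF isoX, of k] and injY = face_iso_inj[OF isoY, of k]
  have push_comm: "push (g' k) (push (hX k) c) = push (hY k) (push (g k) c)"
    if "c \<in> chains X k" for c
  proof -
    have "push (g' k) (push (hX k) c) = push (g' k \<circ> hX k) c" by (rule push_comp_inj_right[OF injX])
    also have "\<dots> = push (hY k \<circ> g k) c"
      by (rule push_cong) (use that comm in \<open>auto simp: chains_def\<close>)
    also have "\<dots> = push (hY k) (push (g k) c)" by (rule push_comp_inj_left[OF injY, symmetric])
    finally show ?thesis .
  qed
  have square: "induced_hom Y' g' k (?QX C) = ?QY (induced_hom Y g k C)"
    if "C \<in> homology X k" for C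
  proof -
    have "push (g' k) ` push (hX k) ` C = push (hY k) ` push (g k) ` C"
      unfolding image_image using homology_class_subset_chains[OF that]
      by (intro image_cong[OF refl]) (simp add: push_comm subset_iff)
    thus ?thesis unfolding induced_hom_def face_iso_homologous_Image[OF isoY] by simp
  qed
  have "bij_betw (induced_hom Y g k) (homology X k) (homology Y k)"
    using hiso unfolding homology_iso_def by blast
  hence "bij_betw (?QY \<circ> induced_hom Y g k) (homology X k) (homology Y' k)"
    using face_iso_homology[OF isoY] by (rule bij_betw_trans)
  hence "bij_betw (induced_hom Y' g' k \<circ> ?QX) (homology X k) (homology Y' k)"
    by (subst bij_betw_cong[where g="?QY \<circ> induced_hom Y g k"]) (auto simp: square)
  thus "bij_betw (induced_hom Y' g' k) (homology X' k) (homology Y' k)"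
    using bij_betw_comp_iff[OF face_iso_homology[OF isoX]] by blast
qed

lemma mono_map_comp: "mono_map m n \<theta> \<Longrightarrow> mono_map k m \<alpha> \<Longrightarrow> mono_map k n (\<theta> \<circ> \<alpha>)"
  unfolding mono_map_def by auto

lemma mono_map_coface: "i \<le> Suc k \<Longrightarrow> mono_map k (Suc k) (coface i)"
  unfolding mono_map_def coface_def by auto

lemma sset_act_cell: "is_sset X \<Longrightarrow> mono_map m n \<theta> \<Longrightarrow> x \<in> cells X n \<Longrightarrow> act X \<theta> m n x \<in> cells X m"
  unfolding is_sset_def by blast

lemma sset_act_cong:
  "is_sset X \<Longrightarrow> mono_map m n \<theta> \<Longrightarrow> (\<And>i. i \<le> m \<Longrightarrow> \<theta> i = \<theta>' i) \<Longrightarrow> x \<in> cells X n \<Longrightarrow>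
    act X \<theta> m n x = act X \<theta>' m n x"
  unfolding is_sset_def by blast

lemma sset_act_comp:
  "is_sset X \<Longrightarrow> mono_map m n \<theta> \<Longrightarrow> mono_map k m \<alpha> \<Longrightarrow> x \<in> cells X n \<Longrightarrow>
    act X \<alpha> k m (act X \<theta> m n x) = act X (\<theta> \<circ> \<alpha>) k n x"
  unfolding is_sset_def by blast

text \<open>The composite is normalised to \<open>0\<close> outside \<open>{0..k}\<close>, as in \<^const>\<open>dp_map\<close>.\<close>
lemma sset_act_act:
  assumes X: "is_sset X" and \<theta>: "mono_map m n \<theta>" and \<alpha>: "mono_map k m \<alpha>" and x: "x \<in> cells X n"
  shows "act X \<alpha> k m (act X \<theta> m n x) = act X (\<lambda>i. if i \<le> k then \<theta> (\<alpha> i) else 0) k n x"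
  unfolding sset_act_comp[OF assms] by (rule sset_act_cong[OF X mono_map_comp[OF \<theta> \<alpha>] _ x]) simp

lemma smap_cell: "is_smap X Y f \<Longrightarrow> x \<in> cells X n \<Longrightarrow> f n x \<in> cells Y n"
  unfolding is_smap_def by blast

lemma smap_act: "is_smap X Y f \<Longrightarrow> mono_map m n \<theta> \<Longrightarrow> x \<in> cells X n \<Longrightarrow>
    f m (act X \<theta> m n x) = act Y \<theta> m n (f n x)"
  unfolding is_smap_def by blast

lemma cells_sset_pullback:
  "cells (sset_pullback X Y f g) k = {(x, y). x \<in> cells X k \<and> y \<in> cells Y k \<and> f k x = g k y}"
  unfolding sset_pullback_def by simp

lemma act_sset_pullback:
  "act (sset_pullback X Y f g) \<theta> m n (x, y) = (act X \<theta> m n x, act Y \<theta> m n y)"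
  unfolding sset_pullback_def by simp

lemma cells_dp: "cells (dp B E p n \<sigma>) k =
   {(\<alpha>, e). mono_map k n \<alpha> \<and> (\<forall>i>k. \<alpha> i = 0) \<and> e \<in> cells E k \<and> act B \<alpha> k n \<sigma> = p k e}"
  unfolding dp_def sset_pullback_def std_simplex_def char_map_def by auto

lemma act_dp:
  "act (dp B E p n \<sigma>) \<theta> m k (\<alpha>, e) = ((\<lambda>i. if i \<le> m then \<alpha> (\<theta> i) else 0), act E \<theta> m k e)"
  unfolding dp_def sset_pullback_def std_simplex_def by simp

definition dp_pullback_map ::
    "'c sset \<Rightarrow> 'c \<Rightarrow> nat \<Rightarrow> nat \<Rightarrow> (nat \<Rightarrow> nat) \<times> 'e \<Rightarrow> (nat \<Rightarrow> nat) \<times> ('c \<times> 'e)" where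
  "dp_pullback_map B' \<tau> m k = (\<lambda>(\<alpha>, e). (\<alpha>, (act B' \<alpha> k m \<tau>, e)))"

context
  fixes E :: "'e sset" and B :: "'b sset" and B' :: "'c sset"
    and p :: "nat \<Rightarrow> 'e \<Rightarrow> 'b" and f :: "nat \<Rightarrow> 'c \<Rightarrow> 'b" and m :: nat and \<tau> :: 'c
  assumes B': "is_sset B'" and f: "is_smap B' B f" and \<tau>: "\<tau> \<in> cells B' m"
begin

lemma dp_pullback_map_cells:
  "dp_pullback_map B' \<tau> m k ` cells (dp B E p m (f m \<tau>)) k
     = cells (dp B' (sset_pullback B' E f p) (\<lambda>n. fst) m \<tau>) k"
proof (intro set_eqI iffI)
  fix y assume "y \<in> dp_pullback_map B' \<tau> m k ` cells (dp B E p m (f m \<tau>)) k"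
  then obtain \<alpha> e where y: "y = (\<alpha>, (act B' \<alpha> k m \<tau>, e))" and \<alpha>: "mono_map k m \<alpha>"
    and cell: "(\<alpha>, e) \<in> cells (dp B E p m (f m \<tau>)) k"
    unfolding dp_pullback_map_def cells_dp by auto
  show "y \<in> cells (dp B' (sset_pullback B' E f p) (\<lambda>n. fst) m \<tau>) k"
    using cell sset_act_cell[OF B' \<alpha> \<tau>] smap_act[OF f \<alpha> \<tau>]
    unfolding y cells_dp cells_sset_pullback by simp
next
  fix y assume "y \<in> cells (dp B' (sset_pullback B' E f p) (\<lambda>n. fst) m \<tau>) k"
  then obtain \<alpha> e where y: "y = (\<alpha>, (act B' \<alpha> k m \<tau>, e))" and \<alpha>: "mono_map k m \<alpha>"
    and cell: "(\<alpha>, (act B' \<alpha> k m \<tau>, e)) \<in> cells (dp B' (sset_pullback B' E f p) (\<lambda>n. fst) m \<tau>) k"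
    unfolding cells_dp by auto
  have "(\<alpha>, e) \<in> cells (dp B E p m (f m \<tau>)) k"
    using cell smap_act[OF f \<alpha> \<tau>] unfolding cells_dp cells_sset_pullback by simp
  moreover have "y = dp_pullback_map B' \<tau> m k (\<alpha>, e)"
    unfolding y dp_pullback_map_def by simp
  ultimately show "y \<in> dp_pullback_map B' \<tau> m k ` cells (dp B E p m (f m \<tau>)) k" by blast
qed

lemma dp_pullback_map_face:
  assumes x: "x \<in> cells (dp B E p m (f m \<tau>)) (Suc k)" and i: "i \<le> Suc k"
  shows "face (dp B' (sset_pullback B' E f p) (\<lambda>n. fst) m \<tau>) (Suc k) i (dp_pullback_map B' \<tau> m (Suc k) x)
      = dp_pullback_map B' \<tau> m k (face (dp B E p m (f m \<tau>)) (Suc k) i x)"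
proof -
  obtain \<alpha> e where x_eq: "x = (\<alpha>, e)" and \<alpha>: "mono_map (Suc k) m \<alpha>"
    using x unfolding cells_dp by auto
  have "act B' (coface i) k (Suc k) (act B' \<alpha> (Suc k) m \<tau>)
      = act B' (\<lambda>j. if j \<le> k then \<alpha> (coface i j) else 0) k m \<tau>"
    by (rule sset_act_act[OF B' \<alpha> mono_map_coface[OF i] \<tau>])
  thus ?thesis
    unfolding x_eq face_def dp_pullback_map_def by (simp add: act_dp act_sset_pullback)
qed

lemma face_iso_dp_pullback:
  "face_iso (dp B E p m (f m \<tau>)) (dp B' (sset_pullback B' E f p) (\<lambda>n. fst) m \<tau>)
     (dp_pullback_map B' \<tau> m)"
  unfolding face_iso_def
proof (intro conjI allI impI)
  show "inj (dp_pullback_map B' \<tau> m k)" for k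
    unfolding dp_pullback_map_def inj_def by auto
qed (simp_all add: dp_pullback_map_cells dp_pullback_map_face)

end

lemma dp_map_dp_pullback_map:
  assumes "is_sset B'" and "mono_map m n \<theta>" and "\<sigma> \<in> cells B' n"
    and "x \<in> cells (dp B E p m \<rho>) k"
  shows "dp_map \<theta> k (dp_pullback_map B' (act B' \<theta> m n \<sigma>) m k x)
       = dp_pullback_map B' \<sigma> n k (dp_map \<theta> k x)"
proof -
  obtain \<alpha> e where x: "x = (\<alpha>, e)" and \<alpha>: "mono_map k m \<alpha>"
    using assms(4) unfolding cells_dp by auto
  show ?thesis
    using sset_act_act[OF assms(1,2) \<alpha> assms(3)]
    unfolding x dp_pullback_map_def dp_map_def by simp
qed

theorem proposition1p3:
  fixes E :: "'e sset" and B :: "'b sset" and B' :: "'c sset"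
    and p :: "nat \<Rightarrow> 'e \<Rightarrow> 'b" and f :: "nat \<Rightarrow> 'c \<Rightarrow> 'b"
  assumes "is_sset E" and "is_sset B" and "is_sset B'"
    and "is_smap E B p" and "is_smap B' B f"
    and "weak_homology_fibration E B p"
    and "kan_fibration B' B f"
  shows "weak_homology_fibration (sset_pullback B' E f p) B' (\<lambda>n. fst)"
  unfolding weak_homology_fibration_def
proof (intro allI impI, elim conjE)
  fix n \<sigma> m \<theta> assume \<sigma>: "\<sigma> \<in> cells B' n" and \<theta>: "mono_map m n \<theta>"
  define \<tau> where "\<tau> = act B' \<theta> m n \<sigma>"
  have \<tau>: "\<tau> \<in> cells B' m" unfolding \<tau>_def by (rule sset_act_cell[OF assms(3) \<theta> \<sigma>])
  have "f m \<tau> = act B \<theta> m n (f n \<sigma>)"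
    unfolding \<tau>_def by (rule smap_act[OF assms(5) \<theta> \<sigma>])
  moreover have "homology_iso (dp B E p m (act B \<theta> m n (f n \<sigma>))) (dp B E p n (f n \<sigma>)) (dp_map \<theta>)"
    using assms(6) smap_cell[OF assms(5) \<sigma>] \<theta> unfolding weak_homology_fibration_def by blast
  ultimately have iso_p: "homology_iso (dp B E p m (f m \<tau>)) (dp B E p n (f n \<sigma>)) (dp_map \<theta>)"
    by simp
  show "homology_iso (dp B' (sset_pullback B' E f p) (\<lambda>n. fst) m (act B' \<theta> m n \<sigma>))
      (dp B' (sset_pullback B' E f p) (\<lambda>n. fst) n \<sigma>) (dp_map \<theta>)"
    unfolding \<tau>_def[symmetric]
    by (rule homology_iso_transfer[OF face_iso_dp_pullback[OF assms(3,5) \<tau>]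
          face_iso_dp_pullback[OF assms(3,5) \<sigma>] _ iso_p])
       (simp add: \<tau>_def dp_map_dp_pullback_map[OF assms(3) \<theta> \<sigma>])
qed

end
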